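(* Let $G$ be an innately transitive permutation group on a finite set $\Omega$ with a nonabelian plinth $M=T_1\times\cdots\times T_k$, where $T_1,\ldots,T_k$ are the (pairwise isomorphic, nonabelian) simple normal subgroups of $M$, and let $\sigma_i:M\to T_i$ be the $i$-th projection. Let $\omega\in\Omega$ and let $\{K_1,\ldots,K_\ell\}$ be a Cartesian system of subgroups in $M$ with respect to $\omega$. Then for all $i\in\{1,\ldots,k\}$ and all $j\in\{1,\ldots,\ell\}$, $$T_i=\sigma_i(K_j)\Bigl(\bigcap_{m\ne j}\sigma_i(K_m)\Bigr).$$
   Context: A finite permutation group is innately transitive if it has a transitive minimal normal subgroup, called a plinth. If $G$ is innately transitive on $\Omega$ with plinth $M$ and $\omega\in\Omega$, a Cartesian system of subgroups in $M$ with respect to $\omega$ is a set $\{K_1,\ldots,K_\ell\}$ of subgroups of $M$ which is invariant under conjugation by $G_\omega$ and satisfies (i) $\bigcap_{i=1}^\ell K_i=M_\omega$ and (ii) $K_i\bigl(\bigcap_{j\ne i}K_j\bigr)=M$ for all $i$ (an empty intersection being $M$). *)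

theory Defs
  imports "HOL-Algebra.Algebra"
begin

abbreviation subgrp :: "'a set \<Rightarrow> ('a \<Rightarrow> 'a) set \<Rightarrow> ('a \<Rightarrow> 'a) monoid" where
  "subgrp \<Omega> H \<equiv> (BijGroup \<Omega>)\<lparr>carrier := H\<rparr>"

definition perm_group :: "'a set \<Rightarrow> ('a \<Rightarrow> 'a) set \<Rightarrow> bool" where
  "perm_group \<Omega> G \<longleftrightarrow> subgroup G (BijGroup \<Omega>)"

definition minimal_normal :: "('b, 'c) monoid_scheme \<Rightarrow> 'b set \<Rightarrow> bool" where
  "minimal_normal Gr N \<longleftrightarrow> N \<lhd> Gr \<and> N \<noteq> {\<one>\<^bsub>Gr\<^esub>} \<and>
     (\<forall>L. L \<lhd> Gr \<and> L \<subseteq> N \<longrightarrow> L = {\<one>\<^bsub>Gr\<^esub>} \<or> L = N)"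

definition transitive_on :: "'a set \<Rightarrow> ('a \<Rightarrow> 'a) set \<Rightarrow> bool" where
  "transitive_on \<Omega> M \<longleftrightarrow> (\<forall>\<alpha>\<in>\<Omega>. \<forall>\<beta>\<in>\<Omega>. \<exists>m\<in>M. m \<alpha> = \<beta>)"

definition plinth :: "'a set \<Rightarrow> ('a \<Rightarrow> 'a) set \<Rightarrow> ('a \<Rightarrow> 'a) set \<Rightarrow> bool" where
  "plinth \<Omega> G M \<longleftrightarrow> minimal_normal (subgrp \<Omega> G) M \<and> transitive_on \<Omega> M"

definition innately_transitive :: "'a set \<Rightarrow> ('a \<Rightarrow> 'a) set \<Rightarrow> bool" where
  "innately_transitive \<Omega> G \<longleftrightarrow> perm_group \<Omega> G \<and> (\<exists>M. plinth \<Omega> G M)"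

definition stab :: "('a \<Rightarrow> 'a) set \<Rightarrow> 'a \<Rightarrow> ('a \<Rightarrow> 'a) set" where
  "stab H \<omega> = {h \<in> H. h \<omega> = \<omega>}"

text \<open>Cartesian system of subgroups in M with respect to omega (a finite set of subgroups;
  intersections are taken inside M, so the empty intersection is M).\<close>
definition cartesian_system ::
  "'a set \<Rightarrow> ('a \<Rightarrow> 'a) set \<Rightarrow> ('a \<Rightarrow> 'a) set \<Rightarrow> 'a \<Rightarrow> ('a \<Rightarrow> 'a) set set \<Rightarrow> bool" where
  "cartesian_system \<Omega> G M \<omega> \<K> \<longleftrightarrow>
     finite \<K> \<and>
     (\<forall>K\<in>\<K>. subgroup K (subgrp \<Omega> M)) \<and>
     (\<forall>g\<in>stab G \<omega>. \<forall>K\<in>\<K>.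
        (\<lambda>x. g \<otimes>\<^bsub>BijGroup \<Omega>\<^esub> x \<otimes>\<^bsub>BijGroup \<Omega>\<^esub> inv\<^bsub>BijGroup \<Omega>\<^esub> g) ` K \<in> \<K>) \<and>
     M \<inter> \<Inter>\<K> = stab M \<omega> \<and>
     (\<forall>K\<in>\<K>. K <#>\<^bsub>BijGroup \<Omega>\<^esub> (M \<inter> \<Inter>(\<K> - {K})) = M)"

definition internal_direct_product :: "('b, 'c) monoid_scheme \<Rightarrow> ('i \<Rightarrow> 'b set) \<Rightarrow> 'i set \<Rightarrow> bool" where
  "internal_direct_product H T I \<longleftrightarrow>
     (\<forall>i\<in>I. T i \<lhd> H) \<and>
     generate H (\<Union>i\<in>I. T i) = carrier H \<and>
     (\<forall>i\<in>I. T i \<inter> generate H (\<Union>j\<in>I - {i}. T j) = {\<one>\<^bsub>H\<^esub>})"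

definition proj :: "('b, 'c) monoid_scheme \<Rightarrow> ('i \<Rightarrow> 'b set) \<Rightarrow> 'i set \<Rightarrow> 'i \<Rightarrow> 'b \<Rightarrow> 'b" where
  "proj H T I i x = (THE t. t \<in> T i \<and> (\<exists>s\<in>generate H (\<Union>j\<in>I - {i}. T j). x = t \<otimes>\<^bsub>H\<^esub> s))"

end

theory Submission
  imports Defs
begin

text \<open>The projection sigma_i is a homomorphism from M onto T_i that fixes T_i pointwise.
  Applying it to the Cartesian factorisation M = K_j (\<Inter>_{m \<noteq> j} K_m) gives
  T_i = sigma_i(K_j) sigma_i(\<Inter>_{m \<noteq> j} K_m), and sigma_i(\<Inter>_{m \<noteq> j} K_m) lies in
  T_i \<inter> \<Inter>_{m \<noteq> j} sigma_i(K_m), which is contained in T_i.\<close>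

context group begin

lemma normal_subgroups_commute:
  assumes N1: "N1 \<lhd> G" and N2: "N2 \<lhd> G" and trivial: "N1 \<inter> N2 = {\<one>}"
    and x: "x \<in> N1" and y: "y \<in> N2"
  shows "x \<otimes> y = y \<otimes> x"
proof -
  have S1: "subgroup N1 G" and S2: "subgroup N2 G"
    using normal_imp_subgroup[OF N1] normal_imp_subgroup[OF N2] .
  have xc: "x \<in> carrier G" and yc: "y \<in> carrier G"
    using subgroup.mem_carrier[OF S1 x] subgroup.mem_carrier[OF S2 y] .
  define c where "c = x \<otimes> y \<otimes> inv x \<otimes> inv y"
  have "y \<otimes> inv x \<otimes> inv y \<in> N1"
    using normal.inv_op_closed2[OF N1 yc subgroup.m_inv_closed[OF S1 x]] .
  then have "x \<otimes> (y \<otimes> inv x \<otimes> inv y) \<in> N1" using subgroup.m_closed[OF S1 x] by blast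
  then have c1: "c \<in> N1" using xc yc by (simp add: c_def m_assoc)
  have "x \<otimes> y \<otimes> inv x \<in> N2" using normal.inv_op_closed2[OF N2 xc y] .
  then have c2: "c \<in> N2" unfolding c_def using subgroup.m_closed[OF S2] subgroup.m_inv_closed[OF S2 y] by blast
  have "c = \<one>" using c1 c2 trivial by blast
  then have "x \<otimes> y \<otimes> inv (y \<otimes> x) = \<one>" using xc yc by (simp add: c_def inv_mult_group m_assoc)
  then show ?thesis using xc yc by (simp add: inv_solve_right')
qed

lemma commute_generate:
  assumes x: "x \<in> carrier G" and A: "A \<subseteq> carrier G"
    and commute: "\<And>a. a \<in> A \<Longrightarrow> x \<otimes> a = a \<otimes> x" and s: "s \<in> generate G A"
  shows "x \<otimes> s = s \<otimes> x"
  using s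
proof (induction s rule: generate.induct)
  case one
  show ?case using x by simp
next
  case (incl a)
  show ?case by (rule commute[OF incl])
next
  case (inv a)
  have ac: "a \<in> carrier G" using inv A by blast
  have "inv a \<otimes> x = inv a \<otimes> (x \<otimes> a) \<otimes> inv a" using x ac by (simp add: m_assoc)
  also have "\<dots> = inv a \<otimes> (a \<otimes> x) \<otimes> inv a" using commute[OF inv] by simp
  also have "\<dots> = x \<otimes> inv a" using x ac by (simp add: m_assoc[symmetric])
  finally show ?case by simp
next
  case (eng s1 s2)
  have "s1 \<in> carrier G" "s2 \<in> carrier G" using eng.hyps generate_incl[OF A] by blast+
  then show ?case using x eng.IH by (simp add: m_assoc[symmetric]) (simp add: m_assoc)
qed

lemma internal_direct_product_normal:
  "internal_direct_product G T I \<Longrightarrow> i \<in> I \<Longrightarrow> T i \<lhd> G"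
  unfolding internal_direct_product_def by blast

lemma internal_direct_product_subgroup:
  "internal_direct_product G T I \<Longrightarrow> i \<in> I \<Longrightarrow> subgroup (T i) G"
  by (rule normal_imp_subgroup[OF internal_direct_product_normal])

lemma internal_direct_product_complement_subgroup:
  assumes "internal_direct_product G T I"
  shows "subgroup (generate G (\<Union>j\<in>I - {i}. T j)) G"
proof (rule generate_is_subgroup)
  show "(\<Union>j\<in>I - {i}. T j) \<subseteq> carrier G"
    using subgroup.subset[OF internal_direct_product_subgroup[OF assms]] by blast
qed

lemma internal_direct_product_factor_inter_complement:
  "internal_direct_product G T I \<Longrightarrow> i \<in> I \<Longrightarrow> T i \<inter> generate G (\<Union>j\<in>I - {i}. T j) = {\<one>}"
  unfolding internal_direct_product_def by blast

lemma internal_direct_product_commute: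
  assumes idp: "internal_direct_product G T I" and i: "i \<in> I"
    and t: "t \<in> T i" and s: "s \<in> generate G (\<Union>j\<in>I - {i}. T j)"
  shows "t \<otimes> s = s \<otimes> t"
proof (rule commute_generate[OF _ _ _ s])
  show "t \<in> carrier G" using subgroup.mem_carrier[OF internal_direct_product_subgroup[OF idp i] t] .
  show "(\<Union>j\<in>I - {i}. T j) \<subseteq> carrier G"
    using subgroup.subset[OF internal_direct_product_subgroup[OF idp]] by blast
next
  fix a assume "a \<in> (\<Union>j\<in>I - {i}. T j)"
  then obtain j where j: "j \<in> I" "j \<noteq> i" and a: "a \<in> T j" by blast
  have "T j \<subseteq> generate G (\<Union>j\<in>I - {i}. T j)" using j by (blast intro: generate.incl)
  then have "T i \<inter> T j \<subseteq> {\<one>}" using internal_direct_product_factor_inter_complement[OF idp i] by blast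
  moreover have "\<one> \<in> T i \<inter> T j"
    using subgroup.one_closed[OF internal_direct_product_subgroup[OF idp]] i j(1) by blast
  ultimately have "T i \<inter> T j = {\<one>}" by blast
  then show "t \<otimes> a = a \<otimes> t"
    using normal_subgroups_commute[OF internal_direct_product_normal[OF idp i]
        internal_direct_product_normal[OF idp j(1)] _ t a] by blast
qed

lemma internal_direct_product_decompose:
  assumes idp: "internal_direct_product G T I" and i: "i \<in> I" and x: "x \<in> carrier G"
  obtains t s where "t \<in> T i" "s \<in> generate G (\<Union>j\<in>I - {i}. T j)" "x = t \<otimes> s"
proof -
  let ?N = "generate G (\<Union>j\<in>I - {i}. T j)"
  have Ti: "subgroup (T i) G" using internal_direct_product_subgroup[OF idp i] .
  have N: "subgroup ?N G" using internal_direct_product_complement_subgroup[OF idp] .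
  have TN: "subgroup (T i <#> ?N) G"
    using mult_norm_subgroup[OF internal_direct_product_normal[OF idp i] N] .
  have "T j \<subseteq> T i <#> ?N" if j: "j \<in> I" for j
  proof
    fix y assume y: "y \<in> T j"
    show "y \<in> T i <#> ?N"
    proof (cases "j = i")
      case True
      then have "y \<otimes> \<one> \<in> T i <#> ?N"
        using y subgroup.one_closed[OF N] unfolding set_mult_def by blast
      then show ?thesis using subgroup.mem_carrier[OF Ti] y True by simp
    next
      case False
      then have "\<one> \<otimes> y \<in> T i <#> ?N"
        using y j subgroup.one_closed[OF Ti] unfolding set_mult_def by (blast intro: generate.incl)
      then show ?thesis using subgroup.mem_carrier[OF internal_direct_product_subgroup[OF idp j] y] by simp
    qed
  qed
  then have "generate G (\<Union>j\<in>I. T j) \<subseteq> T i <#> ?N"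
    by (intro generate_subgroup_incl[OF _ TN]) blast
  then have "x \<in> T i <#> ?N" using idp x unfolding internal_direct_product_def by blast
  then show thesis using that unfolding set_mult_def by blast
qed

lemma proj_mult_complement:
  assumes idp: "internal_direct_product G T I" and i: "i \<in> I"
    and t: "t \<in> T i" and s: "s \<in> generate G (\<Union>j\<in>I - {i}. T j)"
  shows "proj G T I i (t \<otimes> s) = t"
  unfolding proj_def
proof (rule the_equality)
  show "t \<in> T i \<and> (\<exists>s'\<in>generate G (\<Union>j\<in>I - {i}. T j). t \<otimes> s = t \<otimes> s')" using t s by blast
next
  let ?N = "generate G (\<Union>j\<in>I - {i}. T j)"
  have Ti: "subgroup (T i) G" using internal_direct_product_subgroup[OF idp i] .
  have N: "subgroup ?N G" using internal_direct_product_complement_subgroup[OF idp] .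
  fix t' assume "t' \<in> T i \<and> (\<exists>s'\<in>?N. t \<otimes> s = t' \<otimes> s')"
  then obtain s' where t': "t' \<in> T i" and s': "s' \<in> ?N" and eq: "t \<otimes> s = t' \<otimes> s'" by blast
  have tc: "t \<in> carrier G" "t' \<in> carrier G" using subgroup.mem_carrier[OF Ti] t t' by auto
  have sc: "s \<in> carrier G" "s' \<in> carrier G" using subgroup.mem_carrier[OF N] s s' by auto
  have "inv t' \<otimes> t = inv t' \<otimes> (t \<otimes> s) \<otimes> inv s" using tc sc by (simp add: m_assoc)
  also have "\<dots> = inv t' \<otimes> (t' \<otimes> s') \<otimes> inv s" using eq by simp
  also have "\<dots> = s' \<otimes> inv s" using tc sc by (simp add: m_assoc[symmetric])
  finally have "inv t' \<otimes> t = s' \<otimes> inv s" .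
  moreover have "inv t' \<otimes> t \<in> T i" using subgroup.m_closed[OF Ti subgroup.m_inv_closed[OF Ti t'] t] .
  moreover have "s' \<otimes> inv s \<in> ?N" using subgroup.m_closed[OF N s' subgroup.m_inv_closed[OF N s]] .
  ultimately have "inv t' \<otimes> t \<in> T i \<inter> ?N" by simp
  then have "inv t' \<otimes> t = \<one>" using internal_direct_product_factor_inter_complement[OF idp i] by simp
  then show "t' = t" using tc by (simp add: inv_solve_left')
qed

lemma proj_fixes_factor:
  assumes "internal_direct_product G T I" and "i \<in> I" and "t \<in> T i"
  shows "proj G T I i t = t"
  using proj_mult_complement[OF assms generate.one]
    subgroup.mem_carrier[OF internal_direct_product_subgroup[OF assms(1,2)] assms(3)] by simp

lemma proj_hom:
  assumes idp: "internal_direct_product G T I" and i: "i \<in> I"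
  shows "proj G T I i \<in> hom G (G\<lparr>carrier := T i\<rparr>)"
proof (rule homI)
  let ?N = "generate G (\<Union>j\<in>I - {i}. T j)"
  let ?\<sigma> = "proj G T I i"
  have Ti: "subgroup (T i) G" using internal_direct_product_subgroup[OF idp i] .
  have N: "subgroup ?N G" using internal_direct_product_complement_subgroup[OF idp] .
  show "?\<sigma> x \<in> carrier (G\<lparr>carrier := T i\<rparr>)" if x: "x \<in> carrier G" for x
  proof -
    obtain t s where "t \<in> T i" "s \<in> ?N" "x = t \<otimes> s"
      using internal_direct_product_decompose[OF idp i x] .
    then show ?thesis using proj_mult_complement[OF idp i] by simp
  qed
  show "?\<sigma> (x \<otimes> y) = ?\<sigma> x \<otimes>\<^bsub>G\<lparr>carrier := T i\<rparr>\<^esub> ?\<sigma> y"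
    if x: "x \<in> carrier G" and y: "y \<in> carrier G" for x y
  proof -
    obtain t s where t: "t \<in> T i" and s: "s \<in> ?N" and xe: "x = t \<otimes> s"
      using internal_direct_product_decompose[OF idp i x] .
    obtain t' s' where t': "t' \<in> T i" and s': "s' \<in> ?N" and ye: "y = t' \<otimes> s'"
      using internal_direct_product_decompose[OF idp i y] .
    have tc: "t \<in> carrier G" "t' \<in> carrier G" using subgroup.mem_carrier[OF Ti] t t' by auto
    have sc: "s \<in> carrier G" "s' \<in> carrier G" using subgroup.mem_carrier[OF N] s s' by auto
    have "x \<otimes> y = t \<otimes> (s \<otimes> t') \<otimes> s'" using xe ye tc sc by (simp add: m_assoc)
    also have "\<dots> = t \<otimes> (t' \<otimes> s) \<otimes> s'" using internal_direct_product_commute[OF idp i t' s] by simp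
    also have "\<dots> = (t \<otimes> t') \<otimes> (s \<otimes> s')" using tc sc by (simp add: m_assoc)
    finally have "?\<sigma> (x \<otimes> y) = t \<otimes> t'"
      using proj_mult_complement[OF idp i subgroup.m_closed[OF Ti t t'] subgroup.m_closed[OF N s s']]
      by simp
    moreover have "?\<sigma> x = t" "?\<sigma> y = t'"
      using proj_mult_complement[OF idp i t s] proj_mult_complement[OF idp i t' s'] xe ye by simp_all
    ultimately show ?thesis by simp
  qed
qed

lemma retraction_image_set_mult:
  assumes f: "f \<in> hom G (G\<lparr>carrier := T\<rparr>)" and fixes_T: "\<And>t. t \<in> T \<Longrightarrow> f t = t"
    and T: "subgroup T G"
    and KL: "K <#> L = carrier G" and K: "K \<subseteq> carrier G" and L: "L \<subseteq> carrier G"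
    and L': "f ` L \<subseteq> L'" "L' \<subseteq> T"
  shows "T = f ` K <#> L'"
proof
  have "f ` carrier G \<subseteq> T" using f unfolding hom_def by auto
  then have "f ` K \<subseteq> T" using K by blast
  then show "f ` K <#> L' \<subseteq> T"
    using L'(2) subgroup.m_closed[OF T] unfolding set_mult_def by blast
next
  have "T \<subseteq> f ` carrier G" using fixes_T subgroup.subset[OF T] by force
  also have "\<dots> = f ` K <#> f ` L" using set_mult_hom[OF f K L] KL by simp
  also have "\<dots> \<subseteq> f ` K <#> L'" using mono_set_mult L'(1) by blast
  finally show "T \<subseteq> f ` K <#> L'" .
qed

end

lemma plinth_subgroup_BijGroup:
  assumes "perm_group \<Omega> G" and "plinth \<Omega> G M"
  shows "subgroup M (BijGroup \<Omega>)"
proof -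
  have "subgroup M (subgrp \<Omega> G)"
    using assms(2) normal_imp_subgroup unfolding plinth_def minimal_normal_def by blast
  then show ?thesis
    using group.incl_subgroup[OF group_BijGroup] assms(1) unfolding perm_group_def by blast
qed

theorem mainTheorem4:
  fixes \<Omega> :: "'a set" and G M :: "('a \<Rightarrow> 'a) set" and \<omega> :: 'a
    and k :: nat and T :: "nat \<Rightarrow> ('a \<Rightarrow> 'a) set" and \<K> :: "('a \<Rightarrow> 'a) set set"
  assumes "finite \<Omega>"
    and "innately_transitive \<Omega> G"
    and "plinth \<Omega> G M"
    and "\<not> comm_group (subgrp \<Omega> M)"
    and "internal_direct_product (subgrp \<Omega> M) T {1..k}"
    and "\<forall>i\<in>{1..k}. simple_group (subgrp \<Omega> (T i)) \<and> \<not> comm_group (subgrp \<Omega> (T i))"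
    and "\<forall>i\<in>{1..k}. \<forall>j\<in>{1..k}. subgrp \<Omega> (T i) \<cong> subgrp \<Omega> (T j)"
    and "\<omega> \<in> \<Omega>"
    and "cartesian_system \<Omega> G M \<omega> \<K>"
  shows "\<forall>i\<in>{1..k}. \<forall>K\<in>\<K>.
           T i = (proj (subgrp \<Omega> M) T {1..k} i ` K) <#>\<^bsub>BijGroup \<Omega>\<^esub>
                 (T i \<inter> \<Inter>{proj (subgrp \<Omega> M) T {1..k} i ` K' | K'. K' \<in> \<K> - {K}})"
proof (intro ballI)
  fix i K assume i: "i \<in> {1..k}" and K: "K \<in> \<K>"
  let ?M = "subgrp \<Omega> M"
  let ?\<sigma> = "proj ?M T {1..k} i"
  note idp = assms(5)
  have M: "group ?M"
    using group.subgroup_imp_group[OF group_BijGroup] plinth_subgroup_BijGroup assms(2,3)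
    unfolding innately_transitive_def by blast
  have KM: "K \<subseteq> M" and factorisation: "K <#>\<^bsub>?M\<^esub> (M \<inter> \<Inter>(\<K> - {K})) = carrier ?M"
    using assms(9) K subgroup.subset unfolding cartesian_system_def by fastforce+
  have "?\<sigma> ` M \<subseteq> T i"
    using group.proj_hom[OF M idp i] unfolding hom_def by auto
  then have "?\<sigma> ` (M \<inter> \<Inter>(\<K> - {K})) \<subseteq> T i \<inter> \<Inter>{?\<sigma> ` K' | K'. K' \<in> \<K> - {K}}" by blast
  then show "T i = ?\<sigma> ` K <#>\<^bsub>BijGroup \<Omega>\<^esub> (T i \<inter> \<Inter>{?\<sigma> ` K' | K'. K' \<in> \<K> - {K}})"
    using group.retraction_image_set_mult[OF M group.proj_hom[OF M idp i]
        group.proj_fixes_factor[OF M idp i] group.internal_direct_product_subgroup[OF M idp i]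
        factorisation]
      KM by simp
qed

end
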